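(* As formal power series in $t$ (with coefficients polynomials in $x$), \[ \frac{(1-t)^3}{(1-t)^4-xt(t+1)^2}=1+\sum_{m=1}^{\infty}H_m^{(2)}(x)\,t^m . \]
   Context: For integers $m\ge0$, $n\ge1$, let $\theta_m=2\pi/(2m+1)$ and $H_m^{(n)}(x)=\prod_{k=1}^{m}\big(x+(2\cos k\theta_m+2)^n\big)$ (so $H_0^{(n)}=1$). *)

theory Defs
  imports Complex_Main "HOL-Computational_Algebra.Polynomial" "HOL-Computational_Algebra.Formal_Power_Series"
begin

definition theta :: "nat \<Rightarrow> real" where
  "theta m = 2 * pi / (2 * real m + 1)"

definition H :: "nat \<Rightarrow> nat \<Rightarrow> real poly" where
  "H m n = (\<Prod>k\<in>{1..m}. [: (2 * cos (real k * theta m) + 2) ^ n, 1 :])"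

end

theory Submission
  imports Defs
begin

text \<open>
  The numbers \<open>2 cos (k \<theta>) + 2\<close>, \<open>1 \<le> k \<le> m\<close>, are the \<open>m\<close> roots of the polynomial \<open>P m\<close>
  defined by \<open>P 0 = 1\<close>, \<open>P 1 = v - 1\<close>, \<open>P (n + 2) = (v - 2) P (n + 1) - P n\<close>, because
  \<open>P n (2 + 2 cos 2a) = sin ((2n + 1) a) / sin a\<close> is a Dirichlet kernel. Hence
  \<open>H m 2 (-u\<^sup>2) = P m u * P m (-u)\<close> is a product of solutions of two second order recurrences,
  with coefficients \<open>u - 2\<close> and \<open>-u - 2\<close>. Such a product satisfies a fourth order recurrence;
  with \<open>x = -u\<^sup>2\<close> its (palindromic) characteristic polynomial is \<open>(1 - t)\<^sup>4 - x t (t + 1)\<^sup>2\<close>,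
  and the numerator \<open>(1 - t)\<^sup>3\<close> is fixed by the first four coefficients.
\<close>

unbundle fps_syntax

lemma poly_eqI_infinite:
  fixes p q :: "'a::idom poly"
  assumes "infinite A" and "\<And>x. x \<in> A \<Longrightarrow> poly p x = poly q x"
  shows "p = q"
proof (rule ccontr)
  assume "p \<noteq> q"
  then have "finite {x. poly (p - q) x = 0}"
    by (intro poly_roots_finite) simp
  moreover have "A \<subseteq> {x. poly (p - q) x = 0}"
    using assms(2) by auto
  ultimately show False
    using assms(1) finite_subset by blast
qed

lemma poly_eqI_neg_squares:
  fixes p q :: "real poly"
  assumes "\<And>u. poly p (-(u\<^sup>2)) = poly q (-(u\<^sup>2))"
  shows "p = q"
proof (rule poly_eqI_infinite[of "{..0}"])
  fix x :: real
  assume "x \<in> {..0}"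
  then have "x = -((sqrt (-x))\<^sup>2)" by simp
  then show "poly p x = poly q x"
    using assms by metis
qed (rule infinite_Iic)

lemma second_order_recurrence_product:
  fixes p q :: "nat \<Rightarrow> 'a::comm_ring_1"
  assumes p: "\<And>n. p (n + 2) = a * p (n + 1) - p n"
    and q: "\<And>n. q (n + 2) = b * q (n + 1) - q n"
  shows "p (n + 4) * q (n + 4) - a * b * (p (n + 3) * q (n + 3))
    + (a\<^sup>2 + b\<^sup>2 - 2) * (p (n + 2) * q (n + 2)) - a * b * (p (n + 1) * q (n + 1))
    + p n * q n = 0"
proof -
  \<comment> \<open>The characteristic roots of \<open>p n * q n\<close> are the products of those of \<open>p\<close> and \<open>q\<close>.\<close>
  have p4: "p (n + 4) = a * p (n + 3) - p (n + 2)" and p3: "p (n + 3) = a * p (n + 2) - p (n + 1)"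
    and q4: "q (n + 4) = b * q (n + 3) - q (n + 2)" and q3: "q (n + 3) = b * q (n + 2) - q (n + 1)"
    using p[of "n + 2"] p[of "n + 1"] q[of "n + 2"] q[of "n + 1"] by (simp_all add: numeral_eq_Suc)
  show ?thesis
    unfolding p4 q4 p3 q3 p[of n] q[of n] by (simp add: algebra_simps power2_eq_square)
qed

fun dirichlet_poly :: "nat \<Rightarrow> 'a::comm_ring_1 poly" where
  "dirichlet_poly 0 = 1"
| "dirichlet_poly (Suc 0) = [:-1, 1:]"
| "dirichlet_poly (Suc (Suc n)) = [:-2, 1:] * dirichlet_poly (Suc n) - dirichlet_poly n"

lemma poly_dirichlet_poly_Suc_Suc:
  "poly (dirichlet_poly (n + 2)) v = (v - 2) * poly (dirichlet_poly (n + 1)) v - poly (dirichlet_poly n) v"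
  by (simp add: algebra_simps)

lemma dirichlet_poly_degree_coeff:
  "degree (dirichlet_poly n :: 'a::comm_ring_1 poly) \<le> n \<and> coeff (dirichlet_poly n :: 'a poly) n = 1"
proof (induction n rule: dirichlet_poly.induct)
  case (3 n)
  let ?p = "dirichlet_poly (Suc n) :: 'a poly" and ?q = "dirichlet_poly n :: 'a poly"
  have "degree ([:-2, 1:] * ?p) \<le> Suc (Suc n)"
    using degree_mult_le[of "[:-2, 1:]" ?p] 3 by simp
  then have "degree (dirichlet_poly (Suc (Suc n)) :: 'a poly) \<le> Suc (Suc n)"
    using degree_diff_le[of _ "Suc (Suc n)" ?q] 3 by simp
  moreover have "coeff ?q (Suc (Suc n)) = 0" "coeff ?p (Suc (Suc n)) = 0"
    using 3 by (simp_all add: coeff_eq_0)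
  ultimately show ?case
    using 3 by (simp add: mult_pCons_left coeff_pCons)
qed simp_all

lemma sin_times_dirichlet_poly:
  "sin a * poly (dirichlet_poly n) (2 + 2 * cos (2 * a)) = sin ((2 * real n + 1) * a)"
proof (induction n rule: dirichlet_poly.induct)
  case 2
  have "sin (3 * a) = sin a * cos (2 * a) + cos a * sin (2 * a)"
    using sin_add[of a "2 * a"] by simp
  also have "\<dots> = sin a * (2 * cos (2 * a) + 1)"
    by (simp only: sin_double cos_double_cos) (simp add: algebra_simps power2_eq_square)
  finally show ?case by (simp add: algebra_simps)
next
  case (3 n)
  let ?c = "2 + 2 * cos (2 * a)" and ?b = "(2 * real n + 3) * a"
  have "sin a * poly (dirichlet_poly (Suc (Suc n))) ?c
      = 2 * cos (2 * a) * (sin a * poly (dirichlet_poly (Suc n)) ?c) - sin a * poly (dirichlet_poly n) ?c"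
    by (simp add: algebra_simps)
  also have "\<dots> = 2 * cos (2 * a) * sin ?b - sin (?b - 2 * a)"
    using 3 by (simp add: algebra_simps)
  also have "\<dots> = sin (?b + 2 * a)"
    by (simp add: sin_add sin_diff)
  also have "?b + 2 * a = (2 * real (Suc (Suc n)) + 1) * a"
    by (simp add: algebra_simps)
  finally show ?case .
qed simp

lemma dirichlet_poly_root:
  assumes "1 \<le> k" "k \<le> m"
  shows "poly (dirichlet_poly m) (2 * cos (real k * theta m) + 2) = 0"
proof -
  define a where "a = real k * pi / (2 * real m + 1)"
  have "real k * pi < (2 * real m + 1) * pi"
    using assms by (intro mult_strict_right_mono) simp_all
  then have "0 < a" "a < pi"
    using assms by (simp_all add: a_def divide_less_eq)
  then have "sin a \<noteq> 0"
    using sin_gt_zero by fastforce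
  moreover have "sin ((2 * real m + 1) * a) = 0"
    by (simp add: a_def sin_npi)
  ultimately have "poly (dirichlet_poly m) (2 + 2 * cos (2 * a)) = 0"
    using sin_times_dirichlet_poly[of a m] by simp
  moreover have "2 * a = real k * theta m"
    by (simp add: a_def theta_def)
  ultimately show ?thesis
    by (simp add: add.commute)
qed

lemma inj_on_cos_theta: "inj_on (\<lambda>k. 2 * cos (real k * theta m) + 2) {1..m}"
proof
  fix k l
  assume k: "k \<in> {1..m}" and l: "l \<in> {1..m}"
    and eq: "2 * cos (real k * theta m) + 2 = 2 * cos (real l * theta m) + 2"
  have le_pi: "real j * theta m \<le> pi" if "j \<le> m" for j
  proof -
    have "2 * real j * pi \<le> (2 * real m + 1) * pi"
      using that by (intro mult_right_mono) simp_all
    then show ?thesis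
      by (simp add: theta_def divide_le_eq)
  qed
  moreover have "theta m > 0"
    by (simp add: theta_def)
  have "real k * theta m = real l * theta m"
    by (rule cos_inj_pi) (use k l eq le_pi[of k] le_pi[of l] \<open>theta m > 0\<close> in auto)
  then show "k = l"
    using \<open>theta m > 0\<close> by simp
qed

lemma dirichlet_poly_eq_prod:
  "dirichlet_poly m = (\<Prod>k\<in>{1..m}. [:-(2 * cos (real k * theta m) + 2), 1:])"
  (is "_ = ?prod")
proof (rule poly_eqI_degree_lead_coeff[where n = m and A = "(\<lambda>k. 2 * cos (real k * theta m) + 2) ` {1..m}"])
  have "degree ?prod = m"
    by (subst degree_prod_sum_eq) auto
  moreover have "lead_coeff ?prod = 1"
    by (simp add: lead_coeff_prod)
  ultimately show "coeff (dirichlet_poly m) m = coeff ?prod m" "degree ?prod \<le> m"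
    using dirichlet_poly_degree_coeff[of m, where 'a = real] by simp_all
  show "degree (dirichlet_poly m :: real poly) \<le> m"
    using dirichlet_poly_degree_coeff by blast
  show "m \<le> card ((\<lambda>k. 2 * cos (real k * theta m) + 2) ` {1..m})"
    using card_image[OF inj_on_cos_theta] by simp
next
  fix z
  assume "z \<in> (\<lambda>k. 2 * cos (real k * theta m) + 2) ` {1..m}"
  then obtain k where k: "k \<in> {1..m}" "z = 2 * cos (real k * theta m) + 2"
    by blast
  have "poly ?prod z = 0"
    unfolding poly_prod using k by (intro prod_zero bexI[of _ k]) simp_all
  then show "poly (dirichlet_poly m) z = poly ?prod z"
    using k dirichlet_poly_root[of k m] by simp
qed

lemma poly_H2_neg_square:
  "poly (H m 2) (-(u\<^sup>2)) = poly (dirichlet_poly m) u * poly (dirichlet_poly m) (-u)"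
proof -
  let ?c = "\<lambda>k. 2 * cos (real k * theta m) + 2"
  have "poly (H m 2) (-(u\<^sup>2)) = (\<Prod>k\<in>{1..m}. (u - ?c k) * (-u - ?c k))"
    unfolding H_def poly_prod by (intro prod.cong) (simp_all add: algebra_simps power2_eq_square)
  also have "\<dots> = poly (dirichlet_poly m) u * poly (dirichlet_poly m) (-u)"
    unfolding dirichlet_poly_eq_prod poly_prod prod.distrib[symmetric]
    by (intro prod.cong) (simp_all add: algebra_simps)
  finally show ?thesis .
qed

lemma H2_recurrence:
  "H (n + 4) 2 - [:4, 1:] * H (n + 3) 2 + [:6, -2:] * H (n + 2) 2 - [:4, 1:] * H (n + 1) 2 + H n 2 = 0"
proof (rule poly_eqI_neg_squares)
  fix u :: real
  have "poly (dirichlet_poly (n + 4)) u * poly (dirichlet_poly (n + 4)) (-u)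
      - (u - 2) * (-u - 2) * (poly (dirichlet_poly (n + 3)) u * poly (dirichlet_poly (n + 3)) (-u))
      + ((u - 2)\<^sup>2 + (-u - 2)\<^sup>2 - 2) * (poly (dirichlet_poly (n + 2)) u * poly (dirichlet_poly (n + 2)) (-u))
      - (u - 2) * (-u - 2) * (poly (dirichlet_poly (n + 1)) u * poly (dirichlet_poly (n + 1)) (-u))
      + poly (dirichlet_poly n) u * poly (dirichlet_poly n) (-u) = 0"
    by (rule second_order_recurrence_product) (rule poly_dirichlet_poly_Suc_Suc)+
  then show "poly (H (n + 4) 2 - [:4, 1:] * H (n + 3) 2 + [:6, -2:] * H (n + 2) 2
      - [:4, 1:] * H (n + 1) 2 + H n 2) (-(u\<^sup>2)) = poly 0 (-(u\<^sup>2))"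
    unfolding poly_add poly_diff poly_mult poly_H2_neg_square
    by (simp add: algebra_simps power2_eq_square del: dirichlet_poly.simps)
qed

lemma poly_dirichlet_poly_small:
  "poly (dirichlet_poly 0) v = 1"
  "poly (dirichlet_poly 1) v = v - 1"
  "poly (dirichlet_poly 2) v = v\<^sup>2 - 3 * v + 1"
  "poly (dirichlet_poly 3) v = v ^ 3 - 5 * v\<^sup>2 + 6 * v - 1"
  by (simp_all add: numeral_eq_Suc algebra_simps power2_eq_square power3_eq_cube)

lemma H2_initial:
  "H 0 2 = 1"
  "H 1 2 - [:4, 1:] = -3"
  "H 2 2 - [:4, 1:] * H 1 2 + [:6, -2:] = 3"
  "H 3 2 - [:4, 1:] * H 2 2 + [:6, -2:] * H 1 2 - [:4, 1:] = -1"
  by (simp add: H_def)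
    (rule poly_eqI_neg_squares;
     simp only: poly_H2_neg_square poly_dirichlet_poly_small poly_diff poly_add poly_mult poly_minus;
     simp add: algebra_simps power2_eq_square power3_eq_cube)+

lemma H2_convolution:
  "H n 2 - [:4, 1:] * (if n < 1 then 0 else H (n - 1) 2) + [:6, -2:] * (if n < 2 then 0 else H (n - 2) 2)
     - [:4, 1:] * (if n < 3 then 0 else H (n - 3) 2) + (if n < 4 then 0 else H (n - 4) 2)
   = (if n = 0 then 1 else if n = 1 then -3 else if n = 2 then 3 else if n = 3 then -1 else 0)"
proof -
  have "n = 0 \<or> n = 1 \<or> n = 2 \<or> n = 3 \<or> (\<exists>k. n = k + 4)"
    by presburger
  then show ?thesis
    using H2_initial H2_recurrence by (elim disjE exE) (simp_all add: add.commute[of 3])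
qed

theorem proposition4p1:
  fixes t x :: "real poly fps"
  defines "t \<equiv> fps_X" and "x \<equiv> fps_const [:0, 1:]"
  shows "((1 - t) ^ 4 - x * t * (t + 1) ^ 2) * Abs_fps (\<lambda>m. H m 2) = (1 - t) ^ 3"
proof -
  define a b :: "real poly fps" where "a = fps_const [:4, 1:]" and "b = fps_const [:6, -2:]"
  have ab: "a = 4 + x" "b = 6 - 2 * x"
    by (simp_all add: a_def b_def x_def numeral_fps_const fps_const_add[symmetric]
        fps_const_mult[symmetric] fps_const_sub[symmetric] numeral_poly)
  have denom: "(1 - t) ^ 4 - x * t * (t + 1) ^ 2 = 1 - a * t + b * t\<^sup>2 - a * t ^ 3 + t ^ 4"
    unfolding ab by algebra
  have numer: "(1 - t) ^ 3 = 1 - 3 * t + 3 * t\<^sup>2 - t ^ 3"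
    by algebra
  have "((1 - a * t + b * t\<^sup>2 - a * t ^ 3 + t ^ 4) * Abs_fps (\<lambda>m. H m 2)) $ n
      = (1 - 3 * t + 3 * t\<^sup>2 - t ^ 3) $ n" for n
  proof -
    have "((1 - a * t + b * t\<^sup>2 - a * t ^ 3 + t ^ 4) * Abs_fps (\<lambda>m. H m 2)) $ n = H n 2
        - [:4, 1:] * (if n < 1 then 0 else H (n - 1) 2) + [:6, -2:] * (if n < 2 then 0 else H (n - 2) 2)
        - [:4, 1:] * (if n < 3 then 0 else H (n - 3) 2) + (if n < 4 then 0 else H (n - 4) 2)"
      by (simp add: a_def b_def t_def algebra_simps fps_X_power_mult_nth fps_X_mult_nth)
    also have "\<dots> = (1 - 3 * t + 3 * t\<^sup>2 - t ^ 3) $ n"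
      unfolding H2_convolution by (simp add: t_def fps_X_power_nth numeral_fps_const)
    finally show ?thesis .
  qed
  then show ?thesis
    unfolding denom numer by (intro fps_ext)
qed

end
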